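(* There exist instances (a graph with fixed nonnegative embedding weights, features and binary labels) for which the gap between (i) the best accuracy achievable by a linear graph-based classifier on non-strategic data and (ii) the best accuracy achievable by a linear graph-based classifier on strategic data is at least $30\%$ (i.e., at least $0.3$ in accuracy).
   Context: Users $i\in[n]$ have features $x_i\in\mathbb{R}^\ell$ and labels $y_i\in\{\pm1\}$; embeddings $\phi(x_i;x_{-i})=\widetilde{w}_{ii}x_i+\sum_{j\neq i}\widetilde{w}_{ji}x_j$ with fixed $\widetilde{w}_{ji}\ge0$. Classifiers: $h_{\theta,b}(x_i;x_{-i})=\mathrm{sign}(\theta^\top\phi(x_i;x_{-i})+b)$, $\mathrm{sign}(0)=+1$, over all $\theta\in\mathbb{R}^\ell,b\in\mathbb{R}$. Cost $c(x,x')=\|x-x'\|_2$. Strategic data: users respond to $h$ by myopic best-response dynamics ($x_i^{(0)}=x_i$; at each round all users update concurrently; user $i$ changes her features only if currently classified $-1$ and some $x'$ with $h(x';x_{-i})=+1$, with others' current features, has cost $\le 2$, in which case she moves to the minimum-cost such point), run until convergence, yielding $x^h$. Non-strategic accuracy of $h$: $\frac1n|\{i:h(x_i;x_{-i})=y_i\}|$; strategic accuracy: $\frac1n|\{i:h(x^h_i;x^h_{-i})=y_i\}|$. *)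

theory Defs
  imports Complex_Main
begin

text \<open>Users are indexed by i < n; a feature vector in R^l is a function nat => real
  supported on {..<l}.
  Embedding weights: W j i is the weight of user j's features in user i's embedding.\<close>

type_synonym vec = "nat \<Rightarrow> real"
type_synonym profile = "nat \<Rightarrow> vec"

definition vecs :: "nat \<Rightarrow> vec set" where
  "vecs l = {v. \<forall>k\<ge>l. v k = 0}"

definition dist_l :: "nat \<Rightarrow> vec \<Rightarrow> vec \<Rightarrow> real" where
  "dist_l l u v = sqrt (\<Sum>k<l. (u k - v k)^2)"

definition embed :: "nat \<Rightarrow> (nat \<Rightarrow> nat \<Rightarrow> real) \<Rightarrow> profile \<Rightarrow> nat \<Rightarrow> vec" where
  "embed n W X i = (\<lambda>k. \<Sum>j<n. W j i * X j k)"

definition clf :: "nat \<Rightarrow> nat \<Rightarrow> (nat \<Rightarrow> nat \<Rightarrow> real) \<Rightarrow> vec \<Rightarrow> real \<Rightarrow> profile \<Rightarrow> nat \<Rightarrow> int" where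
  "clf n l W \<theta> b X i =
     (if (\<Sum>k<l. \<theta> k * embed n W X i k) + b \<ge> 0 then 1 else -1)"

text \<open>One round of concurrent myopic best response (budget 2, Euclidean cost).\<close>
definition br_step :: "nat \<Rightarrow> nat \<Rightarrow> (nat \<Rightarrow> nat \<Rightarrow> real) \<Rightarrow> vec \<Rightarrow> real \<Rightarrow> profile \<Rightarrow> profile \<Rightarrow> bool" where
  "br_step n l W \<theta> b X X' \<longleftrightarrow>
     (\<forall>i. if i < n \<and> clf n l W \<theta> b X i = -1 \<and>
             (\<exists>x'\<in>vecs l. clf n l W \<theta> b (X(i := x')) i = 1 \<and> dist_l l (X i) x' \<le> 2)
          then X' i \<in> vecs l \<and> clf n l W \<theta> b (X(i := X' i)) i = 1 \<and>
               (\<forall>x''\<in>vecs l. clf n l W \<theta> b (X(i := x'')) i = 1 \<longrightarrow>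
                   dist_l l (X i) (X' i) \<le> dist_l l (X i) x'')
          else X' i = X i)"

definition is_traj :: "nat \<Rightarrow> nat \<Rightarrow> (nat \<Rightarrow> nat \<Rightarrow> real) \<Rightarrow> vec \<Rightarrow> real \<Rightarrow> profile \<Rightarrow> (nat \<Rightarrow> profile) \<Rightarrow> bool" where
  "is_traj n l W \<theta> b X tr \<longleftrightarrow> tr 0 = X \<and> (\<forall>t. br_step n l W \<theta> b (tr t) (tr (Suc t)))"

definition converged_at :: "(nat \<Rightarrow> profile) \<Rightarrow> nat \<Rightarrow> bool" where
  "converged_at tr T \<longleftrightarrow> (\<forall>t\<ge>T. tr t = tr T)"

text \<open>Accuracy of a classifier h evaluated on profile X (non-strategic: X = original features;
  strategic: X = converged profile x^h).\<close>
definition accuracy :: "nat \<Rightarrow> nat \<Rightarrow> (nat \<Rightarrow> nat \<Rightarrow> real) \<Rightarrow> (nat \<Rightarrow> int) \<Rightarrow> vec \<Rightarrow> real \<Rightarrow> profile \<Rightarrow> real" where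
  "accuracy n l W y \<theta> b X = real (card {i. i < n \<and> clf n l W \<theta> b X i = y i}) / real n"

end

theory Submission
  imports Defs
begin

(* Take two users whose weights make the embedding of user 0 identically zero and the
   embedding of user 1 equal to her own feature x_1 = 1, and label user 0 positive and user 1
   negative. The classifier sign(1/2 - x) classifies the unmoved data perfectly. Against
   strategic users, however, user 0 is classified correctly only if b >= 0; but then the origin
   is classified +1 and lies at cost 1 from user 1, who moves there in the first round. After
   that round nobody can improve, so the dynamics stop with accuracy at most 1/2. *)

definition can_improve ::
    "nat \<Rightarrow> nat \<Rightarrow> (nat \<Rightarrow> nat \<Rightarrow> real) \<Rightarrow> vec \<Rightarrow> real \<Rightarrow> profile \<Rightarrow> nat \<Rightarrow> bool" where
  "can_improve n l W \<theta> b X i \<longleftrightarrow> clf n l W \<theta> b X i = -1 \<and>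
     (\<exists>x'\<in>vecs l. clf n l W \<theta> b (X(i := x')) i = 1 \<and> dist_l l (X i) x' \<le> 2)"

definition equilibrium ::
    "nat \<Rightarrow> nat \<Rightarrow> (nat \<Rightarrow> nat \<Rightarrow> real) \<Rightarrow> vec \<Rightarrow> real \<Rightarrow> profile \<Rightarrow> bool" where
  "equilibrium n l W \<theta> b X \<longleftrightarrow> (\<forall>i<n. \<not> can_improve n l W \<theta> b X i)"

lemma br_step_improves:
  assumes "br_step n l W \<theta> b X X'" and "i < n" and "can_improve n l W \<theta> b X i"
  shows "clf n l W \<theta> b (X(i := X' i)) i = 1"
  using assms unfolding br_step_def can_improve_def by (metis (no_types, lifting))

lemma br_step_stays:
  assumes "br_step n l W \<theta> b X X'" and "\<not> (i < n \<and> can_improve n l W \<theta> b X i)"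
  shows "X' i = X i"
  using assms unfolding br_step_def can_improve_def by (metis (no_types, lifting))

lemma br_step_equilibrium:
  assumes "equilibrium n l W \<theta> b X" and "br_step n l W \<theta> b X X'"
  shows "X' = X"
  using assms br_step_stays unfolding equilibrium_def by blast

lemma traj_converged_at_equilibrium:
  assumes traj: "is_traj n l W \<theta> b X tr" and eq: "equilibrium n l W \<theta> b (tr T)"
  shows "converged_at tr T"
  unfolding converged_at_def
proof (intro allI impI)
  have traj_step: "br_step n l W \<theta> b (tr t) (tr (Suc t))" for t
    using traj by (simp add: is_traj_def)
  fix t assume "T \<le> t"
  then show "tr t = tr T"
  proof (induction t rule: dec_induct)
    case (step t)
    then show ?case using br_step_equilibrium[OF _ traj_step] eq by metis
  qed simp
qed

lemma converged_at_unique: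
  assumes "converged_at tr S" and "converged_at tr T"
  shows "tr S = tr T"
  using assms unfolding converged_at_def by (metis max.cobounded1 max.cobounded2)

lemma card_Collect_less_2:
  "card {i::nat. i < 2 \<and> P i} = of_bool (P 0) + of_bool (P 1)"
proof -
  have "{i::nat. i < 2 \<and> P i} = {i. i = 0 \<and> P 0} \<union> {i. i = 1 \<and> P 1}"
    by (auto simp: less_2_cases_iff)
  then show ?thesis by (auto simp: card_insert_if)
qed

lemma accuracy_two_users:
  "accuracy 2 l W y \<theta> b X =
     (of_bool (clf 2 l W \<theta> b X 0 = y 0) + of_bool (clf 2 l W \<theta> b X 1 = y 1)) / 2"
  unfolding accuracy_def card_Collect_less_2 by simp

(* Keeps the numeral 1 (user index and dimension) from being rewritten to Suc 0, so that the
   lemmas about the example below stay applicable by simp. *)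
declare One_nat_def [simp del]

definition W_ex :: "nat \<Rightarrow> nat \<Rightarrow> real" where
  "W_ex j i = (if j = 1 \<and> i = 1 then 1 else 0)"

definition X_ex :: profile where
  "X_ex i = (if i = 1 then (\<lambda>k. if k = 0 then 1 else 0) else (\<lambda>k. 0))"

definition y_ex :: "nat \<Rightarrow> int" where
  "y_ex i = (if i = 0 then 1 else -1)"

lemma clf_ex_user0: "clf 2 1 W_ex \<theta> b X 0 = (if 0 \<le> b then 1 else -1)"
  by (simp add: clf_def embed_def W_ex_def)

lemma clf_ex_user1: "clf 2 1 W_ex \<theta> b X 1 = (if 0 \<le> \<theta> 0 * X 1 0 + b then 1 else -1)"
  by (simp add: clf_def embed_def W_ex_def numeral_2_eq_2 One_nat_def)

lemma ex_user0_cannot_improve: "\<not> can_improve 2 1 W_ex \<theta> b X 0"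
  by (simp add: can_improve_def clf_ex_user0)

lemma ex_can_improve_user1_cong:
  "X 1 = X' 1 \<Longrightarrow> can_improve 2 1 W_ex \<theta> b X 1 = can_improve 2 1 W_ex \<theta> b X' 1"
  by (simp add: can_improve_def clf_ex_user1)

lemma ex_br_step_equilibrium:
  assumes step: "br_step 2 1 W_ex \<theta> b X X'"
  shows "equilibrium 2 1 W_ex \<theta> b X'"
proof -
  have "\<not> can_improve 2 1 W_ex \<theta> b X' 1"
  proof (cases "can_improve 2 1 W_ex \<theta> b X 1")
    case True
    then have "clf 2 1 W_ex \<theta> b (X(1 := X' 1)) 1 = 1"
      using br_step_improves[OF step] by simp
    then show ?thesis by (simp add: can_improve_def clf_ex_user1)
  next
    case False
    then show ?thesis
      using br_step_stays[OF step] ex_can_improve_user1_cong by metis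
  qed
  then show ?thesis
    using ex_user0_cannot_improve by (auto simp: equilibrium_def less_2_cases_iff One_nat_def)
qed

lemma ex_br_step_user1_positive:
  assumes step: "br_step 2 1 W_ex \<theta> b X_ex X'" and "0 \<le> b"
  shows "clf 2 1 W_ex \<theta> b X' 1 = 1"
proof (cases "can_improve 2 1 W_ex \<theta> b X_ex 1")
  case True
  then have "clf 2 1 W_ex \<theta> b (X_ex(1 := X' 1)) 1 = 1"
    using br_step_improves[OF step] by simp
  then show ?thesis by (simp add: clf_ex_user1)
next
  case False
  have "(\<lambda>k. 0) \<in> vecs 1" and "dist_l 1 (X_ex 1) (\<lambda>k. 0) \<le> 2"
      and "clf 2 1 W_ex \<theta> b (X_ex(1 := \<lambda>k. 0)) 1 = 1"
    using \<open>0 \<le> b\<close> by (simp_all add: vecs_def dist_l_def X_ex_def clf_ex_user1)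
  then have "clf 2 1 W_ex \<theta> b X_ex 1 = 1"
    using False unfolding can_improve_def clf_ex_user1 by (auto split: if_splits)
  moreover have "X' 1 = X_ex 1"
    using br_step_stays[OF step] False by simp
  ultimately show ?thesis by (simp add: clf_ex_user1)
qed

lemma ex_strategic_accuracy:
  assumes "br_step 2 1 W_ex \<theta> b X_ex X'"
  shows "accuracy 2 1 W_ex y_ex \<theta> b X' \<le> 1/2"
  using ex_br_step_user1_positive[OF assms]
  by (auto simp: accuracy_two_users clf_ex_user0 y_ex_def)

lemma ex_nonstrategic_accuracy: "accuracy 2 1 W_ex y_ex (\<lambda>k. -1) (1/2) X_ex = 1"
  by (simp add: accuracy_two_users clf_ex_user0 clf_ex_user1 X_ex_def y_ex_def)

theorem proposition5:
  shows "\<exists>(n::nat) (l::nat) (W::nat \<Rightarrow> nat \<Rightarrow> real) (X::profile) (y::nat \<Rightarrow> int).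
     0 < n \<and> (\<forall>i<n. X i \<in> vecs l) \<and> (\<forall>i<n. \<forall>j<n. 0 \<le> W j i) \<and>
     (\<forall>i<n. y i = 1 \<or> y i = -1) \<and>
     (\<exists>\<theta>0 b0. \<forall>\<theta> b tr. is_traj n l W \<theta> b X tr \<longrightarrow>
        (\<exists>T. converged_at tr T) \<and>
        (\<forall>T. converged_at tr T \<longrightarrow>
           accuracy n l W y \<theta> b (tr T) \<le> accuracy n l W y \<theta>0 b0 X - 3/10))"
proof -
  have strategic_gap: "(\<exists>T. converged_at tr T) \<and>
      (\<forall>T. converged_at tr T \<longrightarrow>
         accuracy 2 1 W_ex y_ex \<theta> b (tr T) \<le> accuracy 2 1 W_ex y_ex (\<lambda>k. -1) (1/2) X_ex - 3/10)"
    if traj: "is_traj 2 1 W_ex \<theta> b X_ex tr" for \<theta> b tr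
  proof -
    have step0: "br_step 2 1 W_ex \<theta> b X_ex (tr 1)"
      using traj unfolding is_traj_def by (metis One_nat_def)
    have conv: "converged_at tr 1"
      using traj_converged_at_equilibrium[OF traj ex_br_step_equilibrium[OF step0]] .
    moreover have "accuracy 2 1 W_ex y_ex \<theta> b (tr T) \<le> 1 - 3/10" if "converged_at tr T" for T
      using ex_strategic_accuracy[OF step0] converged_at_unique[OF that conv] by simp
    ultimately show ?thesis
      by (auto simp: ex_nonstrategic_accuracy)
  qed
  have X_ex_vecs: "\<forall>i<2. X_ex i \<in> vecs 1"
    by (simp add: vecs_def X_ex_def)
  show ?thesis
    by (rule exI[of _ 2], rule exI[of _ 1], rule exI[of _ W_ex], rule exI[of _ X_ex],
        rule exI[of _ y_ex]) (simp add: W_ex_def y_ex_def X_ex_vecs, use strategic_gap in blast)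
qed

end
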